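(* Let $n>10^{(10^{13})}$ be an integer with factorization $n=\prod_{i=1}^r p_i^{a_i}$, where $p_i$ is the $i$-th prime, $a_i\ge 0$, and $p_r$ is the largest prime divisor of $n$. For integers $k\ge1$ put $x_k=(k\log n)^{1/k}$, and for a prime $p$ with $x_{k+1}<p\le x_k$ for some integer $k\ge 1$ define $U_n(p)=\left\lfloor \frac{\log(k\log n)}{\log p}\right\rfloor$. Let $G(m)=\frac{\sigma(m)}{m\log\log m}$. Suppose that for some index $s$, $U_n(p_s)$ is defined and $a_s>U_n(p_s)$. Then $G(n)<G(n/p_s)$. Consequently, if $n$ is the least counterexample to Robin's inequality (the least integer $n>5040$ with $\sigma(n)\ge e^\gamma n\log\log n$), then $a_i\le U_n(p_i)$ for all $1\le i\le r$.
   Context: $\sigma(m)=\sum_{d\mid m} d$, $\gamma$ is the Euler–Mascheroni constant, $\log$ is the natural logarithm. *)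

theory Defs
  imports "HOL-Analysis.Analysis" "HOL-Computational_Algebra.Primes"
begin

definition sigma :: "nat \<Rightarrow> real" where
  "sigma m = (\<Sum>d\<in>{d. d dvd m}. real d)"

definition G :: "nat \<Rightarrow> real" where
  "G m = sigma m / (real m * ln (ln (real m)))"

definition xk :: "nat \<Rightarrow> nat \<Rightarrow> real" where
  "xk n k = (real k * ln (real n)) powr (1 / real k)"

definition U_defined :: "nat \<Rightarrow> nat \<Rightarrow> bool" where
  "U_defined n p \<longleftrightarrow> (\<exists>k\<ge>1. xk n (k + 1) < real p \<and> real p \<le> xk n k)"

definition U :: "nat \<Rightarrow> nat \<Rightarrow> int" where
  "U n p = (let k = (THE k. k \<ge> 1 \<and> xk n (k + 1) < real p \<and> real p \<le> xk n k)
            in \<lfloor>ln (real k * ln (real n)) / ln (real p)\<rfloor>)"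

definition least_robin_counterexample :: "nat \<Rightarrow> bool" where
  "least_robin_counterexample n \<longleftrightarrow>
     n > 5040 \<and> sigma n \<ge> exp euler_mascheroni * real n * ln (ln (real n)) \<and>
     (\<forall>m. 5040 < m \<and> m < n \<longrightarrow> sigma m < exp euler_mascheroni * real m * ln (ln (real m)))"

end

theory Submission
  imports Defs
begin

text \<open>If \<open>x (k+1) < p \<le> x k\<close> then \<open>p^k \<le> k log n < (k+1) log n < p^(k+1)\<close>, so \<open>U n p \<ge> k\<close>
  and an exponent \<open>a > U n p\<close> of \<open>p\<close> in \<open>n\<close> forces \<open>p^a > (k+1) log n\<close>. Writing \<open>n = p m\<close>,
  removing the factor \<open>p\<close> costs at most \<open>\<sigma>(n) \<le> (p + p^(1-a)) \<sigma>(m)\<close> in the divisor sum but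
  gains \<open>log log n - log log m \<ge> log p / log n\<close>; as \<open>p^a log p > log n log log m\<close>, the gain wins
  and \<open>G(n) < G(m)\<close>. Moreover \<open>p \<le> log n\<close>, so \<open>m \<ge> sqrt n / 2 > 5040\<close>, and for the least
  counterexample \<open>n\<close> to Robin's inequality \<open>G(m) < e^\<gamma> \<le> G(n)\<close>, a contradiction.\<close>

lemma less_ln_iff_exp_less:
  fixes x :: real
  assumes "0 < x"
  shows "a < ln x \<longleftrightarrow> exp a < x"
  using assms by (metis exp_less_cancel_iff exp_ln)

lemma one_less_ln:
  fixes x :: real
  assumes "exp 1 < x"
  shows "1 < ln x"
  using assms less_ln_iff_exp_less[of x 1] by (simp add: less_trans[OF exp_gt_zero])

lemma ln_ln_pos:
  fixes x :: real
  assumes "exp 1 < x"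
  shows "0 < ln (ln x)"
  using one_less_ln[OF assms] by simp

lemma exp_one_less_ln:
  fixes x :: real
  assumes "27 \<le> x"
  shows "exp 1 < ln x"
proof -
  have "exp (exp 1) < exp (3 :: real)" using e_less_272 by simp
  also have "exp (3 :: real) = exp 1 ^ 3" by (simp flip: exp_of_nat_mult)
  also have "\<dots> < 3 ^ 3" using e_less_272 by (intro power_strict_mono) auto
  finally show ?thesis using assms less_ln_iff_exp_less[of x "exp 1"] by simp
qed

lemma sigma_ge_self:
  assumes "m > 0"
  shows "real m \<le> sigma m"
  unfolding sigma_def by (rule member_le_sum) (use assms finite_divisors_nat in auto)

lemma sigma_prime_mult_le:
  assumes p: "prime p" and m: "m > 0" and pa: "p ^ a dvd m"
  shows "sigma (p * m) \<le> (real p + 1 / real p ^ a) * sigma m"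
proof -
  define D where "D = {d. d dvd m}"
  define C where "C = {d. d dvd p * m \<and> \<not> p dvd d}"
  have p0: "p > 0" using p by (simp add: prime_gt_0_nat)
  have fin_D: "finite D" using m by (simp add: D_def)
  have fin_C: "finite C"
    by (rule finite_subset[of _ "{d. d dvd p * m}"]) (use m p0 in \<open>auto simp: C_def\<close>)
  have divisors: "{d. d dvd p * m} = (\<lambda>d. p * d) ` D \<union> C"
  proof (intro equalityI subsetI)
    fix d assume "d \<in> {d. d dvd p * m}"
    then show "d \<in> (\<lambda>d. p * d) ` D \<union> C"
      using p0 by (cases "p dvd d") (auto simp: D_def C_def)
  qed (auto simp: D_def C_def)
  have "sigma (p * m) = (\<Sum>d\<in>(\<lambda>d. p * d) ` D. real d) + (\<Sum>d\<in>C. real d)"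
    unfolding sigma_def divisors by (rule sum.union_disjoint) (use fin_D fin_C in \<open>auto simp: C_def\<close>)
  also have "(\<Sum>d\<in>(\<lambda>d. p * d) ` D. real d) = real p * sigma m"
    using p0 by (simp add: sum.reindex inj_on_def sigma_def D_def sum_distrib_left)
  also have "(\<Sum>d\<in>C. real d) \<le> sigma m / real p ^ a"
  proof -
    have "(\<lambda>d. p ^ a * d) ` C \<subseteq> D"
    proof
      fix x assume "x \<in> (\<lambda>d. p ^ a * d) ` C"
      then obtain d where d: "d dvd p * m" "\<not> p dvd d" and x: "x = p ^ a * d"
        by (auto simp: C_def)
      have "coprime (p ^ a) d" using d(2) p by (simp add: prime_imp_coprime)
      moreover have "d dvd m"
        using d p by (metis coprime_commute coprime_dvd_mult_right_iff prime_imp_coprime)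
      ultimately show "x \<in> D" using pa by (simp add: D_def x divides_mult)
    qed
    then have "(\<Sum>x\<in>(\<lambda>d. p ^ a * d) ` C. real x) \<le> sigma m"
      unfolding sigma_def D_def[symmetric] by (rule sum_mono2[OF fin_D]) auto
    moreover have "(\<Sum>x\<in>(\<lambda>d. p ^ a * d) ` C. real x) = real p ^ a * (\<Sum>d\<in>C. real d)"
      using p0 by (simp add: sum.reindex inj_on_def sum_distrib_left)
    ultimately show ?thesis using p0 by (simp add: field_simps)
  qed
  finally show ?thesis by (simp add: algebra_simps)
qed

lemma G_prime_mult_less:
  assumes p: "prime p" and m: "exp 1 < real m" and pa: "p ^ a dvd m"
    and small: "ln (real (p * m)) * ln (ln (real m)) < real p ^ Suc a * ln (real p)"
  shows "G (p * m) < G m"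
proof -
  define L where "L = ln (real (p * m))"
  define P where "P = real p ^ Suc a"
  have p2: "2 \<le> real p" using p prime_ge_2_nat by fastforce
  have m0: "m > 0" using m by (intro gr0I) auto
  have lm: "1 < ln (real m)" using one_less_ln[OF m] .
  have llm: "0 < ln (ln (real m))" using ln_ln_pos[OF m] .
  have L: "L = ln (real p) + ln (real m)" using p2 m0 by (simp add: L_def ln_mult)
  have lp: "0 < ln (real p)" using p2 by simp
  have L1: "1 < L" using L lp lm by simp
  then have L0: "0 < L" by simp
  have P0: "0 < P" using p2 by (simp add: P_def)
  \<comment> \<open>\<open>ln x \<le> x - 1\<close> at \<open>x = ln m / L\<close> bounds the drop of \<open>ln \<circ> ln\<close> from below by \<open>ln p / L\<close>.\<close>
  have "ln (ln (real m)) - ln L = ln (ln (real m) / L)"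
    using lm L0 by (simp add: ln_div)
  also have "\<dots> \<le> ln (real m) / L - 1"
    using lm L0 by (intro ln_le_minus_one) simp
  also have "\<dots> = - (ln (real p) / L)"
    using L0 by (simp add: L field_simps)
  finally have "ln (ln (real m)) + ln (real p) / L \<le> ln L" by simp
  moreover have "ln (ln (real m)) / P < ln (real p) / L"
    using small L0 P0 unfolding L_def[symmetric] P_def[symmetric]
    by (simp add: divide_less_eq less_divide_eq mult.commute)
  ultimately have crit: "(1 + 1 / P) * ln (ln (real m)) < ln L"
    by (simp add: distrib_right)
  have "real p + 1 / real p ^ a = (1 + 1 / P) * real p"
    using p2 by (simp add: P_def field_simps)
  then have "sigma (p * m) \<le> (1 + 1 / P) * real p * sigma m"
    using sigma_prime_mult_le[OF p m0 pa] by simp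
  then have "G (p * m) \<le> (1 + 1 / P) * real p * sigma m / (real (p * m) * ln L)"
    unfolding G_def L_def[symmetric] using p2 L1
    by (intro divide_right_mono) (auto intro!: mult_nonneg_nonneg)
  also have "\<dots> = sigma m / real m * ((1 + 1 / P) / ln L)"
    using p2 by simp
  also have "\<dots> < sigma m / real m * (1 / ln (ln (real m)))"
    using crit sigma_ge_self[OF m0] m0 llm L1
    by (intro mult_strict_left_mono) (auto simp: divide_less_eq less_divide_eq)
  also have "\<dots> = G m"
    by (simp add: G_def)
  finally show ?thesis .
qed

lemma xk_eq_root:
  assumes "0 < k" "1 \<le> n"
  shows "xk n k = root k (real k * ln (real n))"
  using assms by (simp add: xk_def root_powr_inverse)

lemma le_xk_iff:
  assumes k: "0 < k" and n: "1 \<le> n" and x: "0 \<le> x"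
  shows "x \<le> xk n k \<longleftrightarrow> x ^ k \<le> real k * ln (real n)"
proof -
  have "x \<le> xk n k \<longleftrightarrow> root k (x ^ k) \<le> root k (real k * ln (real n))"
    using k x by (simp add: xk_eq_root[OF k n] real_root_power_cancel)
  then show ?thesis using k by simp
qed

lemma xk_less_iff:
  assumes k: "0 < k" and n: "1 \<le> n" and x: "0 \<le> x"
  shows "xk n k < x \<longleftrightarrow> real k * ln (real n) < x ^ k"
proof -
  have "xk n k < x \<longleftrightarrow> root k (real k * ln (real n)) < root k (x ^ k)"
    using k x by (simp add: xk_eq_root[OF k n] real_root_power_cancel)
  then show ?thesis using k by simp
qed

lemma ln_xk: "ln (xk n k) = ln (real k * ln (real n)) / real k"
  by (simp add: xk_def)

lemma xk_Suc_less:
  assumes k: "0 < k" and n: "exp 1 < ln (real n)"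
  shows "xk n (Suc k) < xk n k"
proof -
  define L where "L = ln (real n)"
  have L: "exp 1 < L" using n by (simp add: L_def)
  have L0: "0 < L" using less_trans[OF exp_gt_zero L] .
  have "L \<le> real k * L" using k L0 by simp
  then have A: "1 < ln (real k * L)" using L one_less_ln by simp
  have "ln (real (Suc k) / real k) \<le> real (Suc k) / real k - 1"
    using k by (intro ln_le_minus_one) simp
  then have ln_ratio: "real k * ln (real (Suc k) / real k) \<le> 1"
    using k by (simp add: field_simps)
  have "ln (real (Suc k) * L) = ln (real (Suc k) / real k * (real k * L))"
    using k by simp
  also have "\<dots> = ln (real (Suc k) / real k) + ln (real k * L)"
    using k L0 by (intro ln_mult_pos) auto
  finally have "real k * ln (real (Suc k) * L)
      = real k * ln (real (Suc k) / real k) + real k * ln (real k * L)"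
    by (simp only: distrib_left)
  moreover have "real (Suc k) * ln (real k * L) = ln (real k * L) + real k * ln (real k * L)"
    by (simp only: of_nat_Suc distrib_right mult_1 add.commute)
  ultimately have "real k * ln (real (Suc k) * L) < real (Suc k) * ln (real k * L)"
    using ln_ratio A by linarith
  then have "ln (xk n (Suc k)) < ln (xk n k)"
    using k by (simp add: ln_xk L_def[symmetric] field_simps)
  moreover have "0 < xk n k" "0 < xk n (Suc k)"
    using k L0 by (simp_all add: xk_def L_def[symmetric])
  ultimately show ?thesis by simp
qed

lemma xk_antimono:
  assumes n: "exp 1 < ln (real n)" and "1 \<le> i" "i \<le> j"
  shows "xk n j \<le> xk n i"
  by (rule lift_Suc_antimono_le_ivl[where N = "{1..}"])
    (use assms xk_Suc_less[OF _ n] in \<open>auto intro: less_imp_le\<close>)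

lemma U_eq_floor:
  assumes n: "exp 1 < ln (real n)" and k: "1 \<le> k" "xk n (k + 1) < real p" "real p \<le> xk n k"
  shows "U n p = \<lfloor>ln (real k * ln (real n)) / ln (real p)\<rfloor>"
proof -
  have "(THE k. k \<ge> 1 \<and> xk n (k + 1) < real p \<and> real p \<le> xk n k) = k"
  proof (rule the_equality)
    fix j assume j: "j \<ge> 1 \<and> xk n (j + 1) < real p \<and> real p \<le> xk n j"
    show "j = k"
    proof (rule ccontr)
      assume "j \<noteq> k"
      then have "xk n k \<le> xk n (j + 1) \<or> xk n j \<le> xk n (k + 1)"
        using xk_antimono[OF n, of "j + 1" k] xk_antimono[OF n, of "k + 1" j] by linarith
      then show False using j k by linarith
    qed
  qed (use k in simp)
  then show ?thesis by (simp add: U_def)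
qed

lemma le_of_power_le_mult:
  fixes x y :: real
  assumes x: "2 \<le> x" and k: "1 \<le> k" and le: "x ^ k \<le> real k * y"
  shows "x \<le> y"
proof -
  obtain j where j: "k = Suc j" using k by (cases k) auto
  have "Suc j \<le> 2 ^ j" using less_exp[of j] by (rule Suc_leI)
  then have "real (Suc j) \<le> real (2 ^ j)" by (rule of_nat_mono)
  then have "real (Suc j) \<le> 2 ^ j" by simp
  also have "\<dots> \<le> x ^ j" using x by (intro power_mono) auto
  finally have kx: "real (Suc j) \<le> x ^ j" .
  have "0 < x ^ k" using x by simp
  then have "0 < real k * y" using le by linarith
  then have y: "0 \<le> y" using k by (simp add: zero_less_mult_iff)
  have "x ^ j * x = x ^ Suc j" by simp
  also have "\<dots> \<le> real (Suc j) * y" using le j by simp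
  also have "\<dots> \<le> x ^ j * y" using kx y by (rule mult_right_mono)
  finally show ?thesis using x by simp
qed

lemma sqrt_le_twice_div:
  assumes p: "p dvd n" and n: "0 < n" and pn: "real p \<le> ln (real n)"
  shows "sqrt (real n) \<le> 2 * real (n div p)"
proof -
  have s: "0 < sqrt (real n)" using n by simp
  have "ln (sqrt (real n)) \<le> sqrt (real n) - 1" using s by (intro ln_le_minus_one)
  then have "ln (real n) \<le> 2 * sqrt (real n)" by (simp add: ln_sqrt)
  have "sqrt (real n) * sqrt (real n) = real p * real (n div p)"
    using p by (simp flip: of_nat_mult)
  also have "\<dots> \<le> 2 * sqrt (real n) * real (n div p)"
    using pn \<open>ln (real n) \<le> 2 * sqrt (real n)\<close> by (intro mult_right_mono) auto
  also have "\<dots> = 2 * real (n div p) * sqrt (real n)" by simp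
  finally show ?thesis using s by (rule mult_right_le_imp_le)
qed

lemma U_defined_imp_power_bounds:
  assumes n: "exp 1 < ln (real n)" and p: "2 \<le> p" and U: "U_defined n p"
  obtains k where "1 \<le> k" "real p ^ k \<le> real k * ln (real n)"
    "real (Suc k) * ln (real n) < real p ^ Suc k" "int k \<le> U n p"
proof -
  obtain k where k: "1 \<le> k" "xk n (k + 1) < real p" "real p \<le> xk n k"
    using U unfolding U_defined_def by blast
  have n1: "1 \<le> n" using n by (cases n) auto
  have pk: "real p ^ k \<le> real k * ln (real n)"
    using k le_xk_iff[OF _ n1, of k "real p"] by simp
  have pk1: "real (Suc k) * ln (real n) < real p ^ Suc k"
    using k xk_less_iff[OF _ n1, of "Suc k" "real p"] by simp
  have "real k * ln (real p) = ln (real p ^ k)" by (rule ln_realpow[symmetric])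
  also have "\<dots> \<le> ln (real k * ln (real n))" using pk p by (intro ln_mono) auto
  finally have "real k \<le> ln (real k * ln (real n)) / ln (real p)"
    using p by (simp add: pos_le_divide_eq)
  then have "int k \<le> U n p"
    using U_eq_floor[OF n k] by (simp add: le_floor_iff)
  with k(1) pk pk1 show ?thesis by (rule that)
qed

lemma mult_ln_less_power_mult_ln:
  fixes x y L :: real
  assumes x: "1 < x" and y: "0 < y" "y \<le> L" and le: "real (Suc k) * L < x ^ Suc k"
  shows "L * ln y < x ^ Suc k * ln x"
proof -
  have L: "0 < L" using y by simp
  have "L \<le> real (Suc k) * L" using L by simp
  then have "ln y \<le> ln (real (Suc k) * L)" using y by (intro ln_mono) linarith+
  also have "\<dots> < ln (x ^ Suc k)"
    using le L x by (intro ln_less_cancel_iff[THEN iffD2]) auto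
  also have "\<dots> = real (Suc k) * ln x" by (rule ln_realpow)
  finally have "L * ln y < L * (real (Suc k) * ln x)" using L by simp
  also have "\<dots> = real (Suc k) * L * ln x" by (simp only: ac_simps)
  also have "\<dots> < x ^ Suc k * ln x" using le x by (intro mult_strict_right_mono) auto
  finally show ?thesis .
qed

lemma G_less_G_div_prime_if_U_lt_multiplicity:
  assumes n: "10 ^ 10 \<le> n" and p: "prime p" and U: "U_defined n p"
    and a: "U n p < int (multiplicity p n)"
  shows "G n < G (n div p)" and "5040 < n div p"
proof -
  define L where "L = ln (real n)"
  define m where "m = n div p"
  have p2: "2 \<le> p" using p prime_ge_2_nat by blast
  have "real (10 ^ 10) \<le> real n" using n by (rule of_nat_mono)
  then have n_real: "10 ^ 10 \<le> real n" by simp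
  then have L: "exp 1 < L" unfolding L_def by (intro exp_one_less_ln) simp
  obtain k where k: "1 \<le> k" and pk: "real p ^ k \<le> real k * L"
    and pk1: "real (Suc k) * L < real p ^ Suc k" and kU: "int k \<le> U n p"
    using U_defined_imp_power_bounds[OF L[unfolded L_def] p2 U] unfolding L_def by blast
  have "Suc k \<le> multiplicity p n" using kU a by linarith
  then have "p ^ Suc k dvd n"
    using le_imp_power_dvd multiplicity_dvd dvd_trans by blast
  then have pkn: "p * p ^ k dvd n" by simp
  then have "p dvd n" by (rule dvd_mult_left)
  then have nm: "n = p * m" by (simp add: m_def)
  have pkm: "p ^ k dvd m" using pkn p2 unfolding nm by simp
  have "real p \<le> L" using le_of_power_le_mult[OF _ k pk] p2 by simp
  then have "sqrt (real n) \<le> 2 * real m"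
    unfolding m_def L_def using \<open>p dvd n\<close> n_real by (intro sqrt_le_twice_div) auto
  moreover have "10 ^ 5 \<le> sqrt (real n)"
    using real_sqrt_le_mono[OF n_real] by simp
  ultimately have m: "5040 < real m" by simp
  then show "5040 < n div p" by (simp add: m_def)
  have "ln (real m) \<le> L" using nm p2 m by (simp add: L_def ln_mult)
  then have "L * ln (ln (real m)) < real p ^ Suc k * ln (real p)"
    using m p2 pk1 by (intro mult_ln_less_power_mult_ln) auto
  then have "G (p * m) < G m"
    using G_prime_mult_less[OF p _ pkm] m e_less_272 nm by (simp add: L_def)
  then show "G n < G (n div p)"
    unfolding m_def[symmetric] using nm by simp
qed

lemma least_robin_counterexample_G_less:
  assumes n: "least_robin_counterexample n" and m: "5040 < m" "m < n"
  shows "G m < G n"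
proof -
  define c :: real where "c = exp euler_mascheroni"
  have pos: "0 < real k * ln (ln (real k))" if "5040 < k" for k
    using that e_less_272 ln_ln_pos[of "real k"] by simp
  have "G m < c"
    using n m pos[of m] unfolding least_robin_counterexample_def G_def c_def
    by (simp add: divide_less_eq mult.assoc)
  also have "c \<le> G n"
    using n pos[of n] unfolding least_robin_counterexample_def G_def c_def
    by (simp add: le_divide_eq mult.assoc)
  finally show ?thesis .
qed

theorem theorem3:
  fixes n :: nat
  assumes "n > 10 ^ (10 ^ 13)"
  shows "(\<forall>p. prime p \<and> U_defined n p \<and> of_nat (multiplicity p n) > U n p
              \<longrightarrow> G n < G (n div p))
         \<and> (least_robin_counterexample n \<longrightarrow>
              (\<forall>p. prime p \<and> p \<le> Max (prime_factors n) \<and> U_defined n p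
                   \<longrightarrow> of_nat (multiplicity p n) \<le> U n p))"
proof -
  have "(10::nat) ^ 10 \<le> 10 ^ 10 ^ 13" by (rule power_increasing) auto
  then have n: "10 ^ 10 \<le> n" using assms by linarith
  note G_less = G_less_G_div_prime_if_U_lt_multiplicity[OF n]
  show ?thesis
  proof (intro conjI allI impI)
    fix p assume "prime p \<and> U_defined n p \<and> int (multiplicity p n) > U n p"
    then show "G n < G (n div p)" using G_less by blast
  next
    fix p assume least: "least_robin_counterexample n"
      and p: "prime p \<and> p \<le> Max (prime_factors n) \<and> U_defined n p"
    have "n div p < n"
      using prime_gt_1_nat[of p] p n by (intro div_less_dividend) auto
    then show "int (multiplicity p n) \<le> U n p"
      using G_less[of p] least_robin_counterexample_G_less[OF least, of "n div p"] p
      by (meson not_le order.asym)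
  qed
qed

end
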